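(* Let $k$ be a finite field of odd characteristic, let $A(t)\in k[t]$ be a square-free polynomial of odd degree $d>1$, and suppose that its derivative satisfies $A'(t)\equiv \gamma$ for some constant $\gamma\in k^*$. Let $E:y^2=f(x)$ be an elliptic curve defined over $k$, with $f(x)\in k[x]$ cubic, and let $E_A$ be the elliptic curve over $k(t)$ defined by $A(t)y^2=f(x)$. Suppose $(F,G)$ is an integral point of $E_A$ (i.e. $F,G\in k[t]$ with $A(t)G(t)^2=f(F(t))$) satisfying $F'\neq 0$. Then the following three conditions are equivalent: (A) $2 \deg F \leq d-1$; (B) $2 \deg G \leq \deg F-1$; (C) $G^2=\beta F'$ for some $\beta\in k^*$. Furthermore, if one of these conditions holds, then $j(E)=1728$.
   Context: $F'$ denotes the derivative of $F$ with respect to $t$; $j(E)$ is the $j$-invariant of $E$. *)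

theory Defs
  imports "HOL-Computational_Algebra.Computational_Algebra"
begin

(* Weierstrass invariants of the curve  y^2 = f(x),  f = a x^3 + b x^2 + c x + e,  a \<noteq> 0.
   Substituting X = a x, Y = a y gives the Weierstrass model
   Y^2 = X^3 + b X^2 + (a c) X + a^2 e, i.e. a1 = a3 = 0, a2 = b, a4 = a c, a6 = a^2 e. *)

definition wa2 :: "'a::field poly \<Rightarrow> 'a" where
  "wa2 f = coeff f 2"
definition wa4 :: "'a::field poly \<Rightarrow> 'a" where
  "wa4 f = coeff f 3 * coeff f 1"
definition wa6 :: "'a::field poly \<Rightarrow> 'a" where
  "wa6 f = (coeff f 3)^2 * coeff f 0"

definition wb2 :: "'a::field poly \<Rightarrow> 'a" where "wb2 f = 4 * wa2 f"
definition wb4 :: "'a::field poly \<Rightarrow> 'a" where "wb4 f = 2 * wa4 f"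
definition wb6 :: "'a::field poly \<Rightarrow> 'a" where "wb6 f = 4 * wa6 f"
definition wb8 :: "'a::field poly \<Rightarrow> 'a" where "wb8 f = 4 * wa2 f * wa6 f - (wa4 f)^2"

definition wc4 :: "'a::field poly \<Rightarrow> 'a" where "wc4 f = (wb2 f)^2 - 24 * wb4 f"

definition wdisc :: "'a::field poly \<Rightarrow> 'a" where
  "wdisc f = - ((wb2 f)^2 * wb8 f) - 8 * (wb4 f)^3 - 27 * (wb6 f)^2 + 9 * wb2 f * wb4 f * wb6 f"

definition is_elliptic_cubic :: "'a::field poly \<Rightarrow> bool" where
  "is_elliptic_cubic f \<longleftrightarrow> degree f = 3 \<and> wdisc f \<noteq> 0"

definition j_invariant :: "'a::field poly \<Rightarrow> 'a" where
  "j_invariant f = (wc4 f)^3 / wdisc f"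

end

theory Submission
  imports Defs "HOL-Algebra.Algebraic_Closure_Type"
begin

(* Differentiating A G^2 = f(F), where A' = \<gamma>, gives f'(F) F' = \<gamma> G^2 + 2 A G G'.
   Over an algebraic closure f = c (x - e1) (x - e2) (x - e3) with distinct roots. Since
   f'(F) = f'(ei) modulo F - ei, every F - ei is coprime to f'(F); hence so is G, which
   divides f(F), and the identity shows that G divides F'. Write A = B1 B2 B3 with Bi dividing
   F - ei; then Bi G divides f'(ei) F' - \<gamma> G^2, a polynomial of degree below deg F.
   As deg A + 2 deg G = 3 deg F, if 2 deg G < deg F the Bi of largest degree is too large
   for this unless f'(ei) F' = \<gamma> G^2. Conversely, if G^2 = \<beta> F', then Bi divides G
   whenever f'(ei) \<noteq> \<beta> \<gamma>, and the degree count allows this for at most one i.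
   Two roots with f'(ej) = f'(ek) satisfy ej + ek = 2 ei, so c6 = 0 and j = 1728. *)

hide_const (open) Polynomials.degree Polynomials.lead_coeff up_ring.coeff module.smult

lemma pcompose_linear:
  fixes F :: "'a::comm_ring_1 poly"
  shows "pcompose [:-e, 1:] F = F - [:e:]"
  by (simp add: pcompose_pCons)

lemma dvd_pcompose_diff_const:
  fixes p F :: "'a::comm_ring_1 poly"
  shows "F - [:e:] dvd pcompose p F - [:poly p e:]"
proof -
  obtain q where q: "p - [:poly p e:] = [:-e, 1:] * q"
    using dvd_iff_poly_eq_0[of "-e" "p - [:poly p e:]"] by (auto elim: dvdE)
  have "pcompose p F - [:poly p e:] = pcompose (p - [:poly p e:]) F"
    by (simp add: pcompose_diff)
  also have "\<dots> = (F - [:e:]) * pcompose q F"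
    by (simp only: q pcompose_mult pcompose_linear)
  finally show ?thesis
    by simp
qed

lemma coprime_sub_const_pcompose:
  fixes q F :: "'a::field poly"
  assumes "poly q e \<noteq> 0"
  shows "coprime (F - [:e:]) (pcompose q F)"
proof (rule coprimeI)
  fix d assume "d dvd F - [:e:]" and "d dvd pcompose q F"
  then have "d dvd pcompose q F - (pcompose q F - [:poly q e:])"
    by (meson dvd_diff dvd_pcompose_diff_const dvd_trans)
  moreover have "is_unit [:poly q e:]"
    using assms by (simp add: is_unit_const_poly_iff dvd_field_iff)
  ultimately show "is_unit d"
    by (simp add: dvd_unit_imp_unit)
qed

lemma coprime_sub_const_sub_const:
  fixes F :: "'a::field poly"
  assumes "e \<noteq> e'"
  shows "coprime (F - [:e:]) (F - [:e':])"
  using coprime_sub_const_pcompose[of "[:-e', 1:]" e F] assms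
  by (simp add: pcompose_linear)

lemma division_decomp_prod:
  fixes a :: "'a::semiring_gcd"
  assumes "finite I" "I \<noteq> {}" "a dvd (\<Prod>i\<in>I. b i)"
  shows "\<exists>c. a = (\<Prod>i\<in>I. c i) \<and> (\<forall>i\<in>I. c i dvd b i)"
  using assms
proof (induction I arbitrary: a rule: finite_ne_induct)
  case (singleton i)
  then show ?case by auto
next
  case (insert i I)
  then obtain x y where "a = x * y" "x dvd b i" "y dvd (\<Prod>j\<in>I. b j)"
    using division_decomp by (metis prod.insert)
  moreover obtain c where "y = (\<Prod>j\<in>I. c j)" "\<forall>j\<in>I. c j dvd b j"
    using insert.IH \<open>y dvd _\<close> by blast
  moreover have "(\<Prod>j\<in>I. (c(i := x)) j) = (\<Prod>j\<in>I. c j)"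
    using insert.hyps by (intro prod.cong) auto
  ultimately show ?case
    using insert.hyps by (intro exI[of _ "c(i := x)"]) auto
qed

lemma prod_three:
  assumes "x \<noteq> y" "x \<noteq> z" "y \<noteq> z"
  shows "(\<Prod>i\<in>{x, y, z}. g i) = g x * g y * g z"
  using assms by (simp add: mult.assoc)

lemma degree_pderiv_less:
  fixes p :: "'a::{comm_semiring_1,semiring_no_zero_divisors} poly"
  assumes "pderiv p \<noteq> 0"
  shows "degree (pderiv p) < degree p"
proof -
  have "degree p \<noteq> 0"
    using assms by (metis degree_0_id pderiv_singleton)
  moreover have "degree (pderiv p) \<le> degree p - 1"
    by (rule degree_le) (auto simp: coeff_pderiv coeff_eq_0)
  ultimately show ?thesis by linarith
qed

lemma degree_lt_if_square_eq_smult_pderiv: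
  fixes F G :: "'a::field poly"
  assumes "G^2 = smult \<beta> (pderiv F)" "\<beta> \<noteq> 0" "pderiv F \<noteq> 0"
  shows "2 * degree G < degree F"
proof -
  have "degree (G^2) = 2 * degree G"
    by (cases "G = 0") (simp_all add: degree_power_eq)
  then show ?thesis
    using assms degree_pderiv_less[OF assms(3)] by simp
qed

lemma pderiv_twist_point:
  fixes A f F G :: "'a::idom poly"
  assumes "A * G^2 = pcompose f F" "pderiv A = [:\<gamma>:]"
  shows "pcompose (pderiv f) F * pderiv F = smult \<gamma> (G^2) + smult 2 (A * G * pderiv G)"
proof -
  have "pcompose (pderiv f) F * pderiv F = pderiv (A * G^2)"
    by (simp only: assms(1) pderiv_pcompose)
  also have "\<dots> = smult \<gamma> (G^2) + smult 2 (A * G * pderiv G)"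
    by (simp add: pderiv_mult pderiv_power assms(2) mult.commute[of _ "[:\<gamma>:]"]
        mult_smult_right ac_simps)
  finally show ?thesis .
qed

lemma degree_twist_point:
  fixes A f F G :: "'a::idom poly"
  assumes "A * G^2 = pcompose f F" "pcompose f F \<noteq> 0"
  shows "degree A + 2 * degree G = degree f * degree F"
proof -
  have "A \<noteq> 0" "G \<noteq> 0"
    using assms by auto
  then show ?thesis
    using arg_cong[OF assms(1), of degree] by (simp add: degree_mult_eq degree_power_eq degree_pcompose)
qed

locale split_twist_point =
  fixes f A F G :: "'a::{field,factorial_ring_gcd,semiring_gcd_mult_normalize} poly"
    and R :: "'a set" and c \<gamma> :: 'a
  assumes finite_R: "finite R"
    and f_split: "f = smult c (\<Prod>e\<in>R. [:-e, 1:])"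
    and c_nz: "c \<noteq> 0"
    and point: "A * G^2 = pcompose f F"
    and pderiv_A: "pderiv A = [:\<gamma>:]"
    and pderiv_F_nz: "pderiv F \<noteq> 0"
begin

lemma degree_F_pos: "0 < degree F"
  using degree_pderiv_less[OF pderiv_F_nz] by simp

lemma pcompose_f: "pcompose f F = smult c (\<Prod>e\<in>R. F - [:e:])"
  by (simp add: f_split pcompose_smult pcompose_prod pcompose_linear)

lemma A_nz: "A \<noteq> 0" and G_nz: "G \<noteq> 0"
proof -
  have "F - [:e:] \<noteq> 0" for e
    using degree_F_pos by auto
  then have "A * G^2 \<noteq> 0"
    by (simp add: point pcompose_f c_nz finite_R)
  then show "A \<noteq> 0" "G \<noteq> 0"
    by auto
qed

lemma degree_A_G: "degree A + 2 * degree G = card R * degree F"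
proof -
  have "degree f = card R"
    by (simp add: f_split c_nz degree_prod_eq_sum_degree)
  moreover have "pcompose f F \<noteq> 0"
    using A_nz G_nz by (simp flip: point)
  ultimately show ?thesis
    using degree_twist_point[OF point] by simp
qed

lemma poly_pderiv_f_nz:
  assumes "e \<in> R"
  shows "poly (pderiv f) e \<noteq> 0"
proof -
  have "f = smult c ([:-e, 1:] * (\<Prod>x\<in>R - {e}. [:-x, 1:]))"
    by (simp add: f_split prod.remove[OF finite_R assms])
  then have "poly (pderiv f) e = c * (\<Prod>x\<in>R - {e}. poly [:-x, 1:] e)"
    by (simp add: pderiv_smult pderiv_mult pderiv_pCons poly_prod del: mult_pCons_left)
  then show ?thesis
    using c_nz finite_R by simp
qed

lemma G_dvd_pderiv_F: "G dvd pderiv F"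
proof -
  let ?Q = "pcompose (pderiv f) F"
  have "G dvd (\<Prod>e\<in>R. F - [:e:])"
  proof -
    have "G dvd A * G^2"
      by (simp add: power2_eq_square)
    then show ?thesis
      using c_nz by (simp add: point pcompose_f dvd_smult_cancel)
  qed
  moreover have "coprime (\<Prod>e\<in>R. F - [:e:]) ?Q"
    by (rule prod_coprime_left, rule coprime_sub_const_pcompose, rule poly_pderiv_f_nz)
  ultimately have "coprime G ?Q"
    by (rule coprime_divisors[OF _ dvd_refl])
  moreover have "G dvd ?Q * pderiv F"
    unfolding pderiv_twist_point[OF point pderiv_A]
    by (intro dvd_add dvd_smult) (simp_all add: power2_eq_square)
  ultimately show ?thesis
    using coprime_dvd_mult_right_iff by blast
qed

lemma factorization_A:
  assumes "R \<noteq> {}"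
  obtains B where "A = (\<Prod>e\<in>R. B e)" "\<forall>e\<in>R. B e dvd F - [:e:]"
proof -
  have "A dvd A * G^2"
    by simp
  then have "A dvd (\<Prod>e\<in>R. F - [:e:])"
    using c_nz by (simp add: point pcompose_f dvd_smult_cancel)
  then show ?thesis
    using division_decomp_prod[OF finite_R assms] that by blast
qed

lemma degree_le_if_dvd_sub_const:
  assumes "B dvd F - [:e:]"
  shows "degree B \<le> degree F"
proof -
  have "F - [:e:] \<noteq> 0"
    using degree_F_pos by auto
  with assms have "degree B \<le> degree (F - [:e:])"
    by (rule dvd_imp_degree_le)
  also have "\<dots> \<le> degree F"
    using degree_diff_le_max[of F "[:e:]"] by simp
  finally show ?thesis .
qed

lemma degree_A_le_two_factors:
  assumes "A = (\<Prod>x\<in>R. B x)" "\<forall>x\<in>R. B x dvd F - [:x:]" "e \<in> R" "e' \<in> R" "e \<noteq> e'"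
  shows "degree A + 2 * degree F \<le> degree (B e) + degree (B e') + card R * degree F"
proof -
  have "\<forall>x\<in>R. B x \<noteq> 0"
    using assms(1) A_nz finite_R by auto
  then have "degree A = (\<Sum>x\<in>R. degree (B x))"
    by (simp add: assms(1) degree_prod_eq_sum_degree)
  also have "\<dots> = degree (B e) + (\<Sum>x\<in>R - {e}. degree (B x))"
    using finite_R assms(3) by (rule sum.remove)
  also have "(\<Sum>x\<in>R - {e}. degree (B x)) = degree (B e') + (\<Sum>x\<in>R - {e} - {e'}. degree (B x))"
    using finite_R assms(4,5) by (intro sum.remove) auto
  also have "R - {e} - {e'} = R - {e, e'}"
    by auto
  also have "(\<Sum>x\<in>R - {e, e'}. degree (B x)) \<le> card (R - {e, e'}) * degree F"
  proof -
    have "degree (B x) \<le> degree F" if "x \<in> R - {e, e'}" for x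
      using assms(2) that by (blast intro: degree_le_if_dvd_sub_const)
    then show ?thesis
      using sum_bounded_above[of "R - {e, e'}" "\<lambda>x. degree (B x)" "degree F"] by simp
  qed
  finally have "degree A \<le> degree (B e) + degree (B e') + card (R - {e, e'}) * degree F"
    by simp
  moreover have "card R = card (R - {e, e'}) + 2"
    using assms(3-5) finite_R card_mono[of R "{e, e'}"] by (simp add: card_Diff_subset)
  ultimately show ?thesis
    by (simp add: distrib_right)
qed

lemma factor_mult_G_dvd:
  assumes "B dvd A" "B dvd F - [:e:]"
  shows "B * G dvd smult (poly (pderiv f) e) (pderiv F) - smult \<gamma> (G^2)"
proof -
  let ?Q = "pcompose (pderiv f) F" and ?c = "poly (pderiv f) e"
  have "smult ?c (pderiv F) - smult \<gamma> (G^2)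
      = smult 2 (A * G * pderiv G) - (?Q - [:?c:]) * pderiv F"
    using pderiv_twist_point[OF point pderiv_A] by (simp add: algebra_simps)
  moreover have "B * G dvd smult 2 (A * G * pderiv G)"
    using assms(1) by (intro dvd_smult) (simp add: mult_dvd_mono)
  moreover have "B * G dvd (?Q - [:?c:]) * pderiv F"
    using assms(2) dvd_pcompose_diff_const G_dvd_pderiv_F by (blast intro: mult_dvd_mono dvd_trans)
  ultimately show ?thesis
    by (simp add: dvd_diff)
qed

lemma pderiv_F_eq_if_large_factor:
  assumes "B dvd A" "B dvd F - [:e:]" "degree A \<le> card R * degree B"
    and "2 \<le> card R" "2 * degree G < degree F"
  shows "smult (poly (pderiv f) e) (pderiv F) = smult \<gamma> (G^2)"
proof (rule ccontr)
  let ?M = "smult (poly (pderiv f) e) (pderiv F) - smult \<gamma> (G^2)"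
  assume "\<not> ?thesis"
  then have "?M \<noteq> 0"
    by simp
  then have "degree (B * G) \<le> degree ?M"
    using factor_mult_G_dvd[OF assms(1,2)] by (simp add: dvd_imp_degree_le)
  moreover have "degree ?M < degree F"
  proof (rule degree_diff_less)
    show "degree (smult (poly (pderiv f) e) (pderiv F)) < degree F"
      using degree_smult_le degree_pderiv_less[OF pderiv_F_nz] by (rule le_less_trans)
    have "degree (G^2) = 2 * degree G"
      by (simp add: degree_power_eq G_nz)
    then show "degree (smult \<gamma> (G^2)) < degree F"
      using degree_smult_le[of \<gamma> "G^2"] assms(5) by linarith
  qed
  moreover have "B \<noteq> 0"
    using assms(1) A_nz by auto
  ultimately have "degree B + degree G + 1 \<le> degree F"
    using G_nz by (simp add: degree_mult_eq)
  then have "card R * (degree B + degree G + 1) \<le> card R * degree F"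
    by (rule mult_le_mono2)
  moreover have "2 * degree G \<le> card R * degree G"
    using assms(4) by (rule mult_le_mono1)
  ultimately show False
    using assms(3,4) degree_A_G by (simp add: distrib_left)
qed

theorem square_G_eq_smult_pderiv_F:
  assumes "2 \<le> card R" "\<gamma> \<noteq> 0" "2 * degree G < degree F"
  shows "\<exists>\<beta>. \<beta> \<noteq> 0 \<and> G^2 = smult \<beta> (pderiv F)"
proof -
  have "R \<noteq> {}"
    using assms(1) by auto
  then obtain B where B: "A = (\<Prod>e\<in>R. B e)" "\<forall>e\<in>R. B e dvd F - [:e:]"
    by (rule factorization_A)
  have "Max ((\<lambda>x. degree (B x)) ` R) \<in> (\<lambda>x. degree (B x)) ` R"
    using finite_R \<open>R \<noteq> {}\<close> by (intro Max_in) auto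
  then obtain e where e: "e \<in> R" "degree (B e) = Max ((\<lambda>x. degree (B x)) ` R)"
    by auto
  have "\<forall>x\<in>R. B x \<noteq> 0"
    using A_nz B(1) finite_R by auto
  then have "degree A = (\<Sum>x\<in>R. degree (B x))"
    by (simp add: B(1) degree_prod_eq_sum_degree)
  also have "\<dots> \<le> card R * degree (B e)"
    using sum_bounded_above[of R "\<lambda>x. degree (B x)" "degree (B e)"] e(2) finite_R by simp
  finally have eq: "smult (poly (pderiv f) e) (pderiv F) = smult \<gamma> (G^2)"
    using B e(1) finite_R assms by (intro pderiv_F_eq_if_large_factor) auto
  then have "poly (pderiv f) e \<noteq> 0"
    using assms(2) G_nz by auto
  moreover have "G^2 = smult (inverse \<gamma>) (smult \<gamma> (G^2))"
    using assms(2) by simp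
  then have "G^2 = smult (poly (pderiv f) e / \<gamma>) (pderiv F)"
    by (simp flip: eq add: divide_inverse mult.commute)
  ultimately show ?thesis
    using assms(2) by (intro exI[of _ "poly (pderiv f) e / \<gamma>"]) simp
qed

lemma factor_dvd_G_if_pderiv_f_ne:
  assumes "G^2 = smult \<beta> (pderiv F)" "B dvd A" "B dvd F - [:e:]"
    and "poly (pderiv f) e \<noteq> \<beta> * \<gamma>"
  shows "B dvd G"
proof -
  let ?c = "poly (pderiv f) e"
  have GG: "G * G = smult \<beta> (pderiv F)"
    using assms(1) by (simp add: power2_eq_square)
  have "smult \<beta> (smult ?c (pderiv F) - smult \<gamma> (G^2)) = smult (?c - \<beta> * \<gamma>) (G * G)"
    unfolding power2_eq_square GG by (rule poly_eqI) (simp add: algebra_simps)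
  then have "B * G dvd smult (?c - \<beta> * \<gamma>) (G * G)"
    by (metis factor_mult_G_dvd[OF assms(2,3)] dvd_smult)
  moreover have "?c - \<beta> * \<gamma> \<noteq> 0"
    using assms(4) by simp
  ultimately have "B * G dvd G * G"
    by (rule dvd_smult_cancel)
  then show ?thesis
    using G_nz by simp
qed

theorem pderiv_f_eq_off_one_root:
  assumes "R \<noteq> {}" "2 * degree G < degree F" "G^2 = smult \<beta> (pderiv F)"
  shows "\<exists>e\<in>R. \<forall>e'\<in>R - {e}. poly (pderiv f) e' = \<beta> * \<gamma>"
proof -
  obtain B where B: "A = (\<Prod>e\<in>R. B e)" "\<forall>e\<in>R. B e dvd F - [:e:]"
    using assms(1) by (rule factorization_A)
  have B_dvd_A: "B e dvd A" if "e \<in> R" for e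
    using B(1) finite_R that by auto
  have B_nz: "B e \<noteq> 0" if "e \<in> R" for e
    using B_dvd_A[OF that] A_nz by auto
  have at_most_one: "poly (pderiv f) e = \<beta> * \<gamma> \<or> poly (pderiv f) e' = \<beta> * \<gamma>"
    if e: "e \<in> R" "e' \<in> R" "e \<noteq> e'" for e e'
  proof (rule ccontr)
    assume "\<not> ?thesis"
    then have "B e dvd G" "B e' dvd G"
      using factor_dvd_G_if_pderiv_f_ne[OF assms(3) B_dvd_A] B(2) e by blast+
    moreover have "coprime (B e) (B e')"
      using B(2) e coprime_divisors[OF _ _ coprime_sub_const_sub_const[OF e(3)]] by blast
    ultimately have "B e * B e' dvd G"
      by (rule divides_mult)
    then have "degree (B e * B e') \<le> degree G"
      using G_nz by (rule dvd_imp_degree_le)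
    then have "degree (B e) + degree (B e') \<le> degree G"
      using B_nz e by (simp add: degree_mult_eq)
    moreover have "degree A + 2 * degree F \<le> degree (B e) + degree (B e') + card R * degree F"
      using B e by (rule degree_A_le_two_factors)
    ultimately show False
      using degree_A_G assms(2) by linarith
  qed
  show ?thesis
  proof (cases "\<exists>e\<in>R. poly (pderiv f) e \<noteq> \<beta> * \<gamma>")
    case True
    then obtain e where "e \<in> R" "poly (pderiv f) e \<noteq> \<beta> * \<gamma>"
      by blast
    then show ?thesis
      using at_most_one by blast
  next
    case False
    then show ?thesis
      using assms(1) by blast
  qed
qed

end

lemma coeff_split_cubic:
  fixes a e1 e2 e3 :: "'a::field"
  defines "f \<equiv> smult a ([:-e1, 1:] * [:-e2, 1:] * [:-e3, 1:])"
  shows "coeff f 3 = a" "coeff f 2 = - a * (e1 + e2 + e3)"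
    and "coeff f 1 = a * (e1 * e2 + e1 * e3 + e2 * e3)" "coeff f 0 = - a * e1 * e2 * e3"
  unfolding f_def by (simp_all add: numeral_3_eq_3 numeral_2_eq_2 algebra_simps)

lemma wdisc_split_cubic:
  fixes a e1 e2 e3 :: "'a::field"
  shows "wdisc (smult a ([:-e1, 1:] * [:-e2, 1:] * [:-e3, 1:]))
    = 16 * a^6 * ((e1 - e2) * (e1 - e3) * (e2 - e3))^2"
  unfolding wdisc_def wb2_def wb4_def wb6_def wb8_def wa2_def wa4_def wa6_def coeff_split_cubic
  by Groebner_Basis.algebra

(* c4^3 - c6^2 = 1728 \<Delta>, where c6 is, up to sign, 32 a^3 times the product of the e_j + e_k - 2 e_i *)
lemma wc4_cube_split_cubic:
  fixes a e1 e2 e3 :: "'a::field"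
  shows "wc4 (smult a ([:-e1, 1:] * [:-e2, 1:] * [:-e3, 1:]))^3
    = 1728 * wdisc (smult a ([:-e1, 1:] * [:-e2, 1:] * [:-e3, 1:]))
      + 1024 * a^6 * ((e2 + e3 - 2 * e1) * (e1 + e3 - 2 * e2) * (e1 + e2 - 2 * e3))^2"
  unfolding wc4_def wdisc_def wb2_def wb4_def wb6_def wb8_def wa2_def wa4_def wa6_def coeff_split_cubic
  by Groebner_Basis.algebra

lemma wc4_cube_eq_1728_wdisc_if_pderiv_eq:
  fixes a e1 e2 e3 :: "'a::field"
  defines "f \<equiv> smult a ([:-e1, 1:] * [:-e2, 1:] * [:-e3, 1:])"
  assumes "a \<noteq> 0" "e2 \<noteq> e3" "poly (pderiv f) e2 = poly (pderiv f) e3"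
  shows "wc4 f ^ 3 = 1728 * wdisc f"
proof -
  have "poly (pderiv f) e2 = a * (e2 - e1) * (e2 - e3)"
    and "poly (pderiv f) e3 = a * (e3 - e1) * (e3 - e2)"
    by (simp_all add: f_def pderiv_smult pderiv_mult pderiv_pCons algebra_simps)
  then have "a * (e2 - e3) * (e2 + e3 - 2 * e1) = 0"
    using assms(4) by Groebner_Basis.algebra
  then have "e2 + e3 - 2 * e1 = 0"
    using assms(2,3) by simp
  then show ?thesis
    unfolding f_def wc4_cube_split_cubic by simp
qed

lemma wc4_cube_eq_1728_wdisc_if_pderiv_eq_off_one_root:
  fixes f :: "'a::field poly"
  assumes "f = smult a (\<Prod>x\<in>R. [:-x, 1:])" "a \<noteq> 0" "card R = 3" "e \<in> R"
    and "\<forall>e'\<in>R - {e}. poly (pderiv f) e' = b"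
  shows "wc4 f ^ 3 = 1728 * wdisc f"
proof -
  have "card (R - {e}) = 2"
    using assms(3,4) by (simp add: card_Diff_singleton_if)
  then obtain e2 e3 where e23: "R - {e} = {e2, e3}" "e2 \<noteq> e3"
    by (auto simp: card_2_iff)
  then have "R = {e, e2, e3}" "e \<noteq> e2" "e \<noteq> e3"
    using assms(4) by auto
  then have "f = smult a ([:-e, 1:] * [:-e2, 1:] * [:-e3, 1:])"
    using assms(1) prod_three[of e e2 e3 "\<lambda>x. [:-x, 1:]"] e23(2) by simp
  moreover have "poly (pderiv f) e2 = poly (pderiv f) e3"
    using assms(5) e23(1) by auto
  ultimately show ?thesis
    using wc4_cube_eq_1728_wdisc_if_pderiv_eq[OF assms(2) e23(2)] by simp
qed

lemma alg_closed_cubic_splits: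
  fixes f :: "'a::alg_closed_field poly"
  assumes "degree f = 3" "wdisc f \<noteq> 0"
  obtains R where "card R = 3" "f = smult (lead_coeff f) (\<Prod>x\<in>R. [:-x, 1:])"
proof -
  have "f \<noteq> 0"
    using assms(1) by auto
  then obtain M where M: "size M = 3" "f = smult (lead_coeff f) (\<Prod>x\<in>#M. [:-x, 1:])"
    using alg_closed_imp_factorization[of f] assms(1) by auto
  obtain xs where "M = mset xs"
    by (metis ex_mset)
  moreover have "length xs = 3"
    using M(1) \<open>M = mset xs\<close> by simp
  ultimately obtain e1 e2 e3 where "M = {#e1, e2, e3#}"
    by (auto simp: numeral_3_eq_3 length_Suc_conv)
  then have prod_M: "(\<Prod>x\<in>#M. g x) = g e1 * g e2 * g e3" for g :: "'a \<Rightarrow> 'a poly"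
    by (simp add: mult.assoc)
  have f: "f = smult (lead_coeff f) ([:-e1, 1:] * [:-e2, 1:] * [:-e3, 1:])"
    using M(2) by (simp only: prod_M)
  then have "wdisc f = 16 * lead_coeff f ^ 6 * ((e1 - e2) * (e1 - e3) * (e2 - e3))^2"
    by (metis wdisc_split_cubic)
  then have distinct: "e1 \<noteq> e2" "e1 \<noteq> e3" "e2 \<noteq> e3"
    using assms(2) by auto
  show ?thesis
  proof (rule that)
    show "card {e1, e2, e3} = 3"
      using distinct by simp
    show "f = smult (lead_coeff f) (\<Prod>x\<in>{e1, e2, e3}. [:-x, 1:])"
      using f by (simp only: prod_three[OF distinct])
  qed
qed

abbreviation ac_poly :: "'a::field poly \<Rightarrow> 'a alg_closure poly" where
  "ac_poly \<equiv> map_poly to_ac"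

lemma coeff_ac_poly [simp]: "coeff (ac_poly p) n = to_ac (coeff p n)"
  by (simp add: coeff_map_poly)

lemma degree_ac_poly [simp]: "degree (ac_poly p) = degree p"
  by (rule degree_map_poly) simp

lemma ac_poly_eq_iff [simp]: "ac_poly p = ac_poly q \<longleftrightarrow> p = q"
  by (metis coeff_ac_poly poly_eq_iff to_ac_eq_iff)

lemma ac_poly_eq_0_iff [simp]: "ac_poly p = 0 \<longleftrightarrow> p = 0"
  using ac_poly_eq_iff[of p 0] by simp

lemma ac_poly_add [simp]: "ac_poly (p + q) = ac_poly p + ac_poly q"
  by (rule poly_eqI) simp

lemma ac_poly_mult [simp]: "ac_poly (p * q) = ac_poly p * ac_poly q"
  by (rule poly_eqI) (simp add: coeff_mult to_ac_sum)

lemma ac_poly_smult [simp]: "ac_poly (smult c p) = smult (to_ac c) (ac_poly p)"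
  by (rule poly_eqI) simp

lemma ac_poly_pCons [simp]: "ac_poly (pCons a p) = pCons (to_ac a) (ac_poly p)"
  by (rule poly_eqI) (simp add: coeff_pCons split: nat.split)

lemma ac_poly_power [simp]: "ac_poly (p ^ n) = ac_poly p ^ n"
  by (induction n) simp_all

lemma ac_poly_pderiv [simp]: "ac_poly (pderiv p) = pderiv (ac_poly p)"
  by (rule poly_eqI) (simp add: coeff_pderiv)

lemma ac_poly_pcompose [simp]: "ac_poly (pcompose p q) = pcompose (ac_poly p) (ac_poly q)"
  by (induction p rule: pCons_induct) (simp_all add: pcompose_pCons)

lemma wc4_ac_poly: "wc4 (ac_poly f) = to_ac (wc4 f)"
  by (simp add: wc4_def wb2_def wb4_def wa2_def wa4_def)

lemma wdisc_ac_poly: "wdisc (ac_poly f) = to_ac (wdisc f)"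
  by (simp add: wdisc_def wb2_def wb4_def wb6_def wb8_def wa2_def wa4_def wa6_def)

lemma ac_poly_eq_smult_ac_poly:
  assumes "ac_poly P = smult b (ac_poly Q)" "Q \<noteq> 0"
  obtains \<beta> where "b = to_ac \<beta>" "P = smult \<beta> Q"
proof
  let ?\<beta> = "lead_coeff P / lead_coeff Q"
  have "to_ac (lead_coeff P) = b * to_ac (lead_coeff Q)"
    using arg_cong[OF assms(1), of lead_coeff] by simp
  then show "b = to_ac ?\<beta>"
    using assms(2) by (simp add: field_simps)
  then have "ac_poly P = ac_poly (smult ?\<beta> Q)"
    using assms(1) by simp
  then show "P = smult ?\<beta> Q"
    by (simp only: ac_poly_eq_iff)
qed

lemma split_twist_point_alg_closure:
  fixes A f F G :: "'k::field poly"
  assumes "is_elliptic_cubic f" "A * G^2 = pcompose f F" "pderiv A = [:\<gamma>:]" "pderiv F \<noteq> 0"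
  obtains R where "card R = 3"
    and "split_twist_point (ac_poly f) (ac_poly A) (ac_poly F) (ac_poly G) R
           (lead_coeff (ac_poly f)) (to_ac \<gamma>)"
proof -
  have "degree (ac_poly f) = 3" "wdisc (ac_poly f) \<noteq> 0"
    using assms(1) by (simp_all add: is_elliptic_cubic_def wdisc_ac_poly)
  then obtain R where R: "card R = 3"
    "ac_poly f = smult (lead_coeff (ac_poly f)) (\<Prod>x\<in>R. [:-x, 1:])"
    by (rule alg_closed_cubic_splits)
  have "split_twist_point (ac_poly f) (ac_poly A) (ac_poly F) (ac_poly G) R
      (lead_coeff (ac_poly f)) (to_ac \<gamma>)"
  proof
    show "finite R"
      using R(1) by (simp add: card_ge_0_finite)
    have "ac_poly f \<noteq> 0"
      using \<open>degree (ac_poly f) = 3\<close> by auto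
    then show "lead_coeff (ac_poly f) \<noteq> 0"
      by simp
    show "ac_poly A * ac_poly G ^ 2 = pcompose (ac_poly f) (ac_poly F)"
      using arg_cong[OF assms(2), of ac_poly] by simp
    show "pderiv (ac_poly A) = [:to_ac \<gamma>:]"
      using arg_cong[OF assms(3), of ac_poly] by simp
    show "pderiv (ac_poly F) \<noteq> 0"
      using assms(4) by (simp flip: ac_poly_pderiv)
  qed (rule R(2))
  with R(1) show ?thesis
    by (rule that)
qed

lemma twist_point_square_pderiv:
  fixes A f F G :: "'k::field poly"
  assumes "is_elliptic_cubic f" "A * G^2 = pcompose f F" "pderiv A = [:\<gamma>:]" "\<gamma> \<noteq> 0"
    and "pderiv F \<noteq> 0" "2 * degree G < degree F"
  shows "\<exists>\<beta>. \<beta> \<noteq> 0 \<and> G^2 = smult \<beta> (pderiv F)"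
proof -
  obtain R where R: "card R = 3"
    and loc: "split_twist_point (ac_poly f) (ac_poly A) (ac_poly F) (ac_poly G) R
      (lead_coeff (ac_poly f)) (to_ac \<gamma>)"
    using split_twist_point_alg_closure[OF assms(1-3,5)] .
  interpret split_twist_point "ac_poly f" "ac_poly A" "ac_poly F" "ac_poly G" R
      "lead_coeff (ac_poly f)" "to_ac \<gamma>"
    by (fact loc)
  obtain b where "b \<noteq> 0" "ac_poly (G^2) = smult b (ac_poly (pderiv F))"
    using square_G_eq_smult_pderiv_F R assms(4,6) by auto
  moreover obtain \<beta> where "b = to_ac \<beta>" "G^2 = smult \<beta> (pderiv F)"
    using ac_poly_eq_smult_ac_poly[OF calculation(2) assms(5)] .
  ultimately show ?thesis
    by auto
qed

lemma twist_point_j_invariant: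
  fixes A f F G :: "'k::field poly"
  assumes "is_elliptic_cubic f" "A * G^2 = pcompose f F" "pderiv A = [:\<gamma>:]"
    and "pderiv F \<noteq> 0" "2 * degree G < degree F" "G^2 = smult \<beta> (pderiv F)"
  shows "j_invariant f = 1728"
proof -
  obtain R where R: "card R = 3"
    and loc: "split_twist_point (ac_poly f) (ac_poly A) (ac_poly F) (ac_poly G) R
      (lead_coeff (ac_poly f)) (to_ac \<gamma>)"
    using split_twist_point_alg_closure[OF assms(1-4)] .
  interpret split_twist_point "ac_poly f" "ac_poly A" "ac_poly F" "ac_poly G" R
      "lead_coeff (ac_poly f)" "to_ac \<gamma>"
    by (fact loc)
  have "ac_poly G ^ 2 = smult (to_ac \<beta>) (pderiv (ac_poly F))"
    using arg_cong[OF assms(6), of ac_poly] by simp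
  moreover have "R \<noteq> {}"
    using R by auto
  ultimately obtain e where "e \<in> R" "\<forall>e'\<in>R - {e}. poly (pderiv (ac_poly f)) e' = to_ac \<beta> * to_ac \<gamma>"
    using pderiv_f_eq_off_one_root assms(5) by fastforce
  then have "wc4 (ac_poly f) ^ 3 = 1728 * wdisc (ac_poly f)"
    using wc4_cube_eq_1728_wdisc_if_pderiv_eq_off_one_root[OF f_split c_nz R] by blast
  then have "wc4 f ^ 3 = 1728 * wdisc f"
    by (simp add: wc4_ac_poly wdisc_ac_poly flip: to_ac_power to_ac_numeral to_ac_mult)
  moreover have "wdisc f \<noteq> 0"
    using assms(1) by (simp add: is_elliptic_cubic_def)
  ultimately show ?thesis
    by (simp add: j_invariant_def)
qed

theorem theorem3p4:
  fixes A f F G :: "'k::field poly" and \<gamma> :: 'k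
  assumes fin: "finite (UNIV :: 'k set)"
    and oddchar: "odd CHAR('k)"
    and sqf: "squarefree A"
    and odddeg: "odd (degree A)"
    and deg_gt: "degree A > 1"
    and deriv_A: "pderiv A = [:\<gamma>:]"
    and gamma_nz: "\<gamma> \<noteq> 0"
    and ell: "is_elliptic_cubic f"
    and point: "A * G^2 = pcompose f F"
    and F_deriv_nz: "pderiv F \<noteq> 0"
  shows "(2 * degree F \<le> degree A - 1
           \<longleftrightarrow> 2 * int (degree G) \<le> int (degree F) - 1)
       \<and> (2 * int (degree G) \<le> int (degree F) - 1
           \<longleftrightarrow> (\<exists>\<beta>. \<beta> \<noteq> 0 \<and> G^2 = smult \<beta> (pderiv F)))
       \<and> (2 * degree F \<le> degree A - 1 \<longrightarrow> j_invariant f = 1728)"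
proof -
  have "0 < degree F"
    using degree_pderiv_less[OF F_deriv_nz] by simp
  moreover have "degree f = 3"
    using ell by (simp add: is_elliptic_cubic_def)
  ultimately have "pcompose f F \<noteq> 0"
    by (metis degree_0 degree_pcompose mult_is_0 neq0_conv zero_neq_numeral)
  then have degrees: "degree A + 2 * degree G = 3 * degree F"
    using degree_twist_point[OF point] \<open>degree f = 3\<close> by simp
  have A_iff_B: "2 * degree F \<le> degree A - 1 \<longleftrightarrow> 2 * int (degree G) \<le> int (degree F) - 1"
    using degrees \<open>0 < degree F\<close> by linarith
  have B_iff_C: "2 * int (degree G) \<le> int (degree F) - 1
      \<longleftrightarrow> (\<exists>\<beta>. \<beta> \<noteq> 0 \<and> G^2 = smult \<beta> (pderiv F))"
    using twist_point_square_pderiv[OF ell point deriv_A gamma_nz F_deriv_nz]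
      degree_lt_if_square_eq_smult_pderiv[OF _ _ F_deriv_nz] by force
  have "2 * degree F \<le> degree A - 1 \<longrightarrow> j_invariant f = 1728"
    using A_iff_B B_iff_C twist_point_j_invariant[OF ell point deriv_A F_deriv_nz] by force
  with A_iff_B B_iff_C show ?thesis
    by blast
qed

end
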